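(* Let $R\subset\mathbb{R}^N$, $R_+$, $\kappa$, $\gamma_\kappa$, $\Delta_\kappa$ be as in the context, $\omega>0$, $g(x)=\exp(-\tfrac\omega2|x|^2)$ and $\mathcal{H}=\omega^2|x|^2-\Delta_\kappa$. Suppose $p$ is a polynomial with $p\in\mathcal{P}_{\le n}$, $\pi_np\neq0$, and $\mathcal{H}(pg)=E\,pg$ for some scalar $E$. Then $E=\omega(N+2\gamma_\kappa+2n)$; $\pi_{n-2i+1}p=0$ for all integers $1\le i\le\frac{n+1}{2}$; $\pi_{n-2i}p=\frac{1}{i!}\left(-\frac{\Delta_\kappa}{4\omega}\right)^i\pi_np$ for all integers $0\le i\le\frac n2$; and $p=\exp\left(-\frac{\Delta_\kappa}{4\omega}\right)\pi_np$.
   Context: Vectors in $\mathbb{R}^N$ are row vectors, $\langle x,y\rangle=\sum x_iy_i$, $|x|^2=\langle x,x\rangle$. For $v\neq0$, $x\sigma_v=x-2\frac{\langle x,v\rangle}{|v|^2}v$. $R$ is a finite reduced root system (finite set of nonzero vectors, closed under all $\sigma_v$, $v\in R$, with $u,cu\in R\Rightarrow c=\pm1$), $R_+=\{v\in R:\langle u_0,v\rangle>0\}$ for a fixed generic $u_0$; multiplicity $\kappa_v$ constant on orbits of the reflection group (real values or formal parameters); $\gamma_\kappa=\sum_{v\in R_+}\kappa_v$. Dunkl operators $\mathcal{D}_if(x)=\partial_if(x)+\sum_{v\in R_+}\kappa_v\frac{f(x)-f(x\sigma_v)}{\langle x,v\rangle}v_i$, $\Delta_\kappa=\sum_i\mathcal{D}_i^2$.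 $\mathcal{P}_k$ denotes homogeneous polynomials of degree $k$, $\mathcal{P}_{\le n}=\mathcal{P}_0+\dots+\mathcal{P}_n$, and $\pi_k$ is the projection of polynomials onto $\mathcal{P}_k$ (with $\pi_k=0$ for $k<0$). The operator $\exp(-\Delta_\kappa/(4\omega))=\sum_{j\ge0}\frac{1}{j!}(-\Delta_\kappa/(4\omega))^j$ is a finite sum on each polynomial since $\Delta_\kappa$ lowers degree by 2. *)

theory Defs
  imports "HOL-Analysis.Analysis"
begin

definition refl :: "real^'n \<Rightarrow> real^'n \<Rightarrow> real^'n" where
  "refl v x = x - (2 * (x \<bullet> v) / (v \<bullet> v)) *\<^sub>R v"

definition root_system :: "(real^'n) set \<Rightarrow> bool" where
  "root_system R \<longleftrightarrow> finite R \<and> 0 \<notin> R \<and>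
     (\<forall>u\<in>R. \<forall>v\<in>R. refl v u \<in> R) \<and>
     (\<forall>u\<in>R. \<forall>c::real. c *\<^sub>R u \<in> R \<longrightarrow> c = 1 \<or> c = -1)"

definition pos_roots :: "(real^'n) set \<Rightarrow> real^'n \<Rightarrow> (real^'n) set" where
  "pos_roots R u0 = {v\<in>R. u0 \<bullet> v > 0}"

definition mult_fn :: "(real^'n) set \<Rightarrow> (real^'n \<Rightarrow> real) \<Rightarrow> bool" where
  "mult_fn R \<kappa> \<longleftrightarrow> (\<forall>u\<in>R. \<forall>v\<in>R. \<kappa> (refl v u) = \<kappa> u)"

definition gamma_k :: "(real^'n) set \<Rightarrow> real^'n \<Rightarrow> (real^'n \<Rightarrow> real) \<Rightarrow> real" where
  "gamma_k R u0 \<kappa> = (\<Sum>v\<in>pos_roots R u0. \<kappa> v)"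

definition regular_set :: "(real^'n) set \<Rightarrow> (real^'n) set" where
  "regular_set R = {x. \<forall>v\<in>R. x \<bullet> v \<noteq> 0}"

definition partial :: "'n \<Rightarrow> (real^'n \<Rightarrow> real) \<Rightarrow> real^'n \<Rightarrow> real" where
  "partial i f x = deriv (\<lambda>t. f (x + t *\<^sub>R axis i 1)) 0"

definition dunkl :: "(real^'n) set \<Rightarrow> real^'n \<Rightarrow> (real^'n \<Rightarrow> real) \<Rightarrow> 'n
    \<Rightarrow> (real^'n \<Rightarrow> real) \<Rightarrow> real^'n \<Rightarrow> real" where
  "dunkl R u0 \<kappa> i f x = partial i f x +
     (\<Sum>v\<in>pos_roots R u0. \<kappa> v * (f x - f (refl v x)) / (x \<bullet> v) * v $ i)"

definition dunkl_lap :: "(real^'n) set \<Rightarrow> real^'n \<Rightarrow> (real^'n \<Rightarrow> real)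
    \<Rightarrow> (real^'n \<Rightarrow> real) \<Rightarrow> real^'n \<Rightarrow> real" where
  "dunkl_lap R u0 \<kappa> f = (\<lambda>x. \<Sum>i\<in>UNIV. dunkl R u0 \<kappa> i (dunkl R u0 \<kappa> i f) x)"

text \<open>Polynomials on R^N as finitely supported coefficient functions on exponent vectors.\<close>
definition mono :: "('n::finite \<Rightarrow> nat) \<Rightarrow> real^'n \<Rightarrow> real" where
  "mono \<alpha> x = (\<Prod>i\<in>UNIV. (x $ i) ^ (\<alpha> i))"

definition mdeg :: "('n::finite \<Rightarrow> nat) \<Rightarrow> nat" where
  "mdeg \<alpha> = (\<Sum>i\<in>UNIV. \<alpha> i)"

definition is_poly :: "(('n \<Rightarrow> nat) \<Rightarrow> real) \<Rightarrow> bool" where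
  "is_poly c \<longleftrightarrow> finite {\<alpha>. c \<alpha> \<noteq> 0}"

definition peval :: "(('n::finite \<Rightarrow> nat) \<Rightarrow> real) \<Rightarrow> real^'n \<Rightarrow> real" where
  "peval c x = (\<Sum>\<alpha>\<in>{\<alpha>. c \<alpha> \<noteq> 0}. c \<alpha> * mono \<alpha> x)"

definition hom_part :: "nat \<Rightarrow> (('n::finite \<Rightarrow> nat) \<Rightarrow> real) \<Rightarrow> ('n \<Rightarrow> nat) \<Rightarrow> real" where
  "hom_part k c = (\<lambda>\<alpha>. if mdeg \<alpha> = k then c \<alpha> else 0)"

definition deg_le :: "nat \<Rightarrow> (('n::finite \<Rightarrow> nat) \<Rightarrow> real) \<Rightarrow> bool" where
  "deg_le n c \<longleftrightarrow> (\<forall>\<alpha>. c \<alpha> \<noteq> 0 \<longrightarrow> mdeg \<alpha> \<le> n)"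

end

theory Submission
  imports Defs "HOL-Computational_Algebra.Polynomial"
begin

text \<open>
  On the regular set the Gaussian g commutes with the Dunkl Laplacian up to lower order terms,
  \<open>\<Delta>(p g) = g (\<Delta>p - \<omega> (N + 2\<gamma>) p - 2\<omega> (x \<bullet> \<nabla>p) + \<omega>\<^sup>2 |x|\<^sup>2 p)\<close>, so the eigenvalue equation
  becomes \<open>\<Sum>\<^sub>k (c\<^sub>k p\<^sub>k - \<Delta>p\<^sub>k) = 0\<close> for the homogeneous parts \<open>p\<^sub>k = \<pi>\<^sub>k p\<close>, where
  \<open>c\<^sub>k = \<omega> (N + 2\<gamma> + 2k) - E\<close> because the Euler operator \<open>x \<bullet> \<nabla>\<close> acts on \<open>p\<^sub>k\<close> by k.
  The Dunkl Laplacian lowers the degree of homogeneity by two, so comparing degrees gives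
  \<open>c\<^sub>k p\<^sub>k = \<Delta>p\<^bsub>k+2\<^esub>\<close> for every k. At k = n the right-hand side vanishes, which forces
  \<open>c\<^sub>n = 0\<close> and determines E; then \<open>c\<^sub>k = 2\<omega> (k - n)\<close> is nonzero below n, and descending
  induction from the degrees n + 1 and n shows that the parts of degree n + 1 - 2i vanish and
  that \<open>p\<^bsub>n-2i\<^esub> = (-\<Delta>/4\<omega>)\<^sup>i p\<^sub>n / i!\<close>.
  Dunkl operators of polynomials are differentiable only off the reflecting hyperplanes, so all
  identities are established on the regular set; a polynomial vanishing there is zero, by
  Kronecker substitution.
\<close>

lemma refl_inner_commute: "refl v x \<bullet> u = x \<bullet> refl v u"
  by (simp add: refl_def inner_commute algebra_simps)

lemma refl_scaleR: "refl v (t *\<^sub>R x) = t *\<^sub>R refl v x"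
  by (simp add: refl_def algebra_simps)

lemma refl_inner_root: "refl v x \<bullet> v = - (x \<bullet> v)"
  by (cases "v \<bullet> v = 0") (simp_all add: refl_def inner_diff_left field_simps)

lemma norm_refl: "norm (refl v x) = norm x"
proof -
  have "refl v x \<bullet> refl v x = x \<bullet> x"
    by (cases "v \<bullet> v = 0")
       (simp_all add: refl_def inner_diff_left inner_diff_right inner_commute field_simps power2_eq_square)
  then show ?thesis by (simp add: norm_eq_sqrt_inner)
qed

lemma bounded_linear_refl: "bounded_linear (refl v)"
proof -
  have "refl v = (\<lambda>y. y - ((2 / (v \<bullet> v)) * (y \<bullet> v)) *\<^sub>R v)"
    by (auto simp: refl_def fun_eq_iff)
  moreover have "bounded_linear (\<lambda>y. y - ((2 / (v \<bullet> v)) * (y \<bullet> v)) *\<^sub>R v)"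
    by (intro bounded_linear_intros)
  ultimately show ?thesis by simp
qed

lemma linear_eq_sum_coords:
  assumes "linear L"
  shows "L (h :: real^'n) = (\<Sum>j\<in>UNIV. h $ j * L (axis j 1))"
proof -
  have "L h = L (\<Sum>j\<in>UNIV. h $ j *\<^sub>R axis j 1)"
    using basis_expansion[of h] by (simp add: scalar_mult_eq_scaleR)
  then show ?thesis by (simp add: linear_sum[OF assms] linear_scale[OF assms])
qed

lemma sum_coord_mult_inner: "(\<Sum>i\<in>UNIV. x $ i * (c * v $ i)) = c * (x \<bullet> v)"
  by (simp add: inner_vec_def sum_distrib_left mult_ac)

lemma sum_axis_mult: "(\<Sum>j\<in>UNIV. axis i (1::real) $ j * c j) = c i"
  by (simp add: axis_def if_distrib[of "\<lambda>a. a * _"] cong: if_cong)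

lemma has_real_derivative_along_line:
  assumes "(f has_derivative f') (at x)"
  shows "((\<lambda>s. f (x + s *\<^sub>R w)) has_real_derivative f' w) (at 0)"
proof -
  have "((\<lambda>s::real. x + s *\<^sub>R w) has_derivative (\<lambda>s. s *\<^sub>R w)) (at 0)"
    by (auto intro!: derivative_eq_intros)
  from diff_chain_at[OF this, of f f'] assms
  have "((\<lambda>s. f (x + s *\<^sub>R w)) has_derivative (\<lambda>s. s *\<^sub>R f' w)) (at 0)"
    by (simp add: o_def linear_scale[OF has_derivative_linear[OF assms]])
  then show ?thesis by (simp add: has_field_derivative_def mult_commute_abs)
qed

lemma partial_eq_derivative: "(f has_derivative f') (at x) \<Longrightarrow> partial i f x = f' (axis i 1)"
  unfolding partial_def by (rule DERIV_imp_deriv[OF has_real_derivative_along_line])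

lemma partial_cong_open:
  assumes "open S" "x \<in> S" "\<And>y. y \<in> S \<Longrightarrow> f y = g y"
  shows "partial i f x = partial i g x"
proof -
  have "((\<lambda>t::real. x + t *\<^sub>R axis i 1) \<longlongrightarrow> x) (nhds 0)"
    by (auto intro!: tendsto_eq_intros filterlim_ident)
  then have "\<forall>\<^sub>F t in nhds 0. x + t *\<^sub>R axis i 1 \<in> S"
    using assms(1,2) by (simp add: topological_tendstoD)
  then have ev: "\<forall>\<^sub>F t in nhds 0. f (x + t *\<^sub>R axis i 1) = g (x + t *\<^sub>R axis i 1)"
    by (rule eventually_mono) (use assms(3) in auto)
  then have "(\<lambda>D. ((\<lambda>t. f (x + t *\<^sub>R axis i 1)) has_real_derivative D) (at 0)) =
      (\<lambda>D. ((\<lambda>t. g (x + t *\<^sub>R axis i 1)) has_real_derivative D) (at 0))"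
    using DERIV_cong_ev[OF refl ev refl] by (auto simp: fun_eq_iff)
  then show ?thesis by (simp add: partial_def deriv_def)
qed

section \<open>Polynomials on the regular set\<close>

lemma open_regular_set: "finite R \<Longrightarrow> open (regular_set R)"
proof -
  assume "finite R"
  have "regular_set R = (\<Inter>v\<in>R. {x. x \<bullet> v \<noteq> 0})" by (auto simp: regular_set_def)
  moreover have "open (\<Inter>v\<in>R. {x. x \<bullet> v \<noteq> (0::real)})"
    using \<open>finite R\<close> by (intro open_INT ballI open_Collect_neq continuous_intros) auto
  ultimately show ?thesis by simp
qed

lemma scaleR_in_regular_set: "x \<in> regular_set R \<Longrightarrow> t \<noteq> 0 \<Longrightarrow> t *\<^sub>R x \<in> regular_set R"
  by (auto simp: regular_set_def)

lemma mono_scaleR: "Defs.mono \<alpha> (t *\<^sub>R x) = t ^ mdeg \<alpha> * Defs.mono \<alpha> x"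
  by (simp add: Defs.mono_def mdeg_def power_mult_distrib prod.distrib power_sum)

lemma peval_superset:
  "finite A \<Longrightarrow> {\<alpha>. c \<alpha> \<noteq> 0} \<subseteq> A \<Longrightarrow> peval c x = (\<Sum>\<alpha>\<in>A. c \<alpha> * Defs.mono \<alpha> x)"
  unfolding peval_def by (rule sum.mono_neutral_left) auto

lemma peval_zero [simp]: "peval (\<lambda>_. 0) x = 0"
  by (simp add: peval_def)

lemma is_poly_hom_part: "is_poly c \<Longrightarrow> is_poly (hom_part k c)"
  unfolding is_poly_def hom_part_def by (rule finite_subset[rotated]) auto

lemma hom_part_eq_0_above: "deg_le n c \<Longrightarrow> n < k \<Longrightarrow> hom_part k c = (\<lambda>_. 0)"
  unfolding deg_le_def hom_part_def by (auto simp: fun_eq_iff)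

lemma peval_hom_part_scaleR: "peval (hom_part k c) (t *\<^sub>R x) = t ^ k * peval (hom_part k c) x"
proof -
  have "peval (hom_part k c) (t *\<^sub>R x) = (\<Sum>\<alpha>\<in>{\<alpha>. hom_part k c \<alpha> \<noteq> 0}. t ^ k * (hom_part k c \<alpha> * Defs.mono \<alpha> x))"
    unfolding peval_def mono_scaleR by (intro sum.cong refl) (auto simp: hom_part_def split: if_splits)
  then show ?thesis by (simp add: peval_def sum_distrib_left)
qed

lemma peval_eq_sum_hom_part:
  assumes "is_poly c" "deg_le n c"
  shows "peval c x = (\<Sum>k\<le>n. peval (hom_part k c) x)"
proof -
  let ?S = "{\<alpha>. c \<alpha> \<noteq> 0}"
  have S: "finite ?S" using assms(1) by (simp add: is_poly_def)
  have "(\<Sum>k\<le>n. peval (hom_part k c) x)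
      = (\<Sum>k\<le>n. \<Sum>\<alpha>\<in>?S. if mdeg \<alpha> = k then c \<alpha> * Defs.mono \<alpha> x else 0)"
    by (intro sum.cong refl, subst peval_superset[OF S]) (auto simp: hom_part_def intro!: sum.cong)
  also have "\<dots> = (\<Sum>\<alpha>\<in>?S. \<Sum>k\<le>n. if mdeg \<alpha> = k then c \<alpha> * Defs.mono \<alpha> x else 0)"
    by (rule sum.swap)
  also have "\<dots> = peval c x"
    using assms(2) by (simp add: peval_def deg_le_def)
  finally show ?thesis ..
qed

lemma base_expansion_inj:
  fixes B :: nat
  assumes "\<forall>k<N. d k < B" "\<forall>k<N. e k < B" "(\<Sum>k<N. d k * B ^ k) = (\<Sum>k<N. e k * B ^ k)"
  shows "\<forall>k<N. d k = e k"
  using assms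
proof (induction N arbitrary: d e)
  case 0
  then show ?case by simp
next
  case (Suc N)
  have split: "(\<Sum>k<Suc N. f k * B ^ k) = f 0 + B * (\<Sum>k<N. f (Suc k) * B ^ k)" for f :: "nat \<Rightarrow> nat"
    by (subst sum.lessThan_Suc_shift) (simp add: sum_distrib_left mult_ac)
  have "d 0 < B" "e 0 < B" using Suc.prems by auto
  moreover have eq: "d 0 + B * (\<Sum>k<N. d (Suc k) * B ^ k) = e 0 + B * (\<Sum>k<N. e (Suc k) * B ^ k)"
    using Suc.prems(3) unfolding split .
  ultimately have "d 0 = e 0"
    by (metis mod_mult_self2 mod_less)
  with eq \<open>d 0 < B\<close> have "(\<Sum>k<N. d (Suc k) * B ^ k) = (\<Sum>k<N. e (Suc k) * B ^ k)" by simp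
  with Suc.prems have "\<forall>k<N. d (Suc k) = e (Suc k)"
    by (intro Suc.IH) auto
  with \<open>d 0 = e 0\<close> show ?case by (auto simp: less_Suc_eq_0_disj)
qed

text \<open>Kronecker substitution: the weights are powers of a base exceeding all exponents.\<close>

lemma kronecker_weights:
  fixes S :: "('n::finite \<Rightarrow> nat) set"
  assumes "finite S"
  obtains w :: "'n \<Rightarrow> nat" where "inj w" "inj_on (\<lambda>\<alpha>. \<Sum>i\<in>UNIV. w i * \<alpha> i) S"
proof -
  define B where "B = 2 + (\<Sum>\<alpha>\<in>S. mdeg \<alpha>)"
  have bound: "\<alpha> i < B" if "\<alpha> \<in> S" for \<alpha> i
  proof -
    have "\<alpha> i \<le> mdeg \<alpha>" unfolding mdeg_def by (rule member_le_sum) auto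
    also have "\<dots> \<le> (\<Sum>\<alpha>\<in>S. mdeg \<alpha>)" using that assms by (intro member_le_sum) auto
    finally show ?thesis by (simp add: B_def)
  qed
  obtain \<iota> :: "'n \<Rightarrow> nat" where \<iota>: "bij_betw \<iota> UNIV {..<CARD('n)}"
    using ex_bij_betw_finite_nat[of "UNIV :: 'n set"] by (auto simp: atLeast0LessThan)
  let ?j = "inv_into UNIV \<iota>"
  have inj: "inj \<iota>" using \<iota> bij_betw_imp_inj_on by blast
  have reindex: "(\<Sum>i\<in>UNIV. B ^ \<iota> i * \<alpha> i) = (\<Sum>k<CARD('n). \<alpha> (?j k) * B ^ k)" for \<alpha> :: "'n \<Rightarrow> nat"
    using sum.reindex_bij_betw[OF \<iota>, of "\<lambda>k. \<alpha> (?j k) * B ^ k"] inj by (simp add: mult.commute)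
  show ?thesis
  proof
    show "inj (\<lambda>i. B ^ \<iota> i)"
      using inj by (auto simp: B_def inj_def)
    show "inj_on (\<lambda>\<alpha>. \<Sum>i\<in>UNIV. B ^ \<iota> i * \<alpha> i) S"
    proof (rule inj_onI)
      fix \<alpha> \<beta> assume "\<alpha> \<in> S" "\<beta> \<in> S"
        and "(\<Sum>i\<in>UNIV. B ^ \<iota> i * \<alpha> i) = (\<Sum>i\<in>UNIV. B ^ \<iota> i * \<beta> i)"
      then have "\<forall>k<CARD('n). \<alpha> (?j k) = \<beta> (?j k)"
        unfolding reindex using bound by (intro base_expansion_inj) auto
      moreover have "\<iota> i < CARD('n)" for i using \<iota> by (auto simp: bij_betw_def)
      ultimately have "\<alpha> (?j (\<iota> i)) = \<beta> (?j (\<iota> i))" for i by blast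
      then show "\<alpha> = \<beta>" by (simp add: fun_eq_iff inv_f_f[OF inj])
    qed
  qed
qed

lemma peval_eq_0_on_regular_set:
  fixes c :: "('n::finite \<Rightarrow> nat) \<Rightarrow> real" and R :: "(real^'n) set"
  assumes R: "finite R" "0 \<notin> R" and c: "is_poly c"
    and zero: "\<And>x. x \<in> regular_set R \<Longrightarrow> peval c x = 0"
  shows "c = (\<lambda>_. 0)"
proof (rule ccontr)
  assume "c \<noteq> (\<lambda>_. 0)"
  then obtain \<beta> where \<beta>: "c \<beta> \<noteq> 0" by auto
  let ?S = "{\<alpha>. c \<alpha> \<noteq> 0}"
  have S: "finite ?S" using c by (simp add: is_poly_def)
  obtain w where w: "inj w" and enc: "inj_on (\<lambda>\<alpha>. \<Sum>i\<in>UNIV. w i * \<alpha> i) ?S"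
    using kronecker_weights[OF S] by blast
  define curve :: "real \<Rightarrow> real^'n" where "curve t = (\<chi> i. t ^ w i)" for t
  define Q where "Q = (\<Sum>\<alpha>\<in>?S. monom (c \<alpha>) (\<Sum>i\<in>UNIV. w i * \<alpha> i))"
  have peval_curve: "peval c (curve t) = poly Q t" for t
    by (simp add: Q_def peval_def poly_sum poly_monom Defs.mono_def curve_def power_mult power_sum)
  have "coeff Q (\<Sum>i\<in>UNIV. w i * \<beta> i) = (\<Sum>\<alpha>\<in>?S. if \<alpha> = \<beta> then c \<alpha> else 0)"
    unfolding Q_def coeff_sum coeff_monom using enc \<beta> by (intro sum.cong refl) (auto dest: inj_onD)
  with \<beta> S have "Q \<noteq> 0" by auto
  define V where "V v = (\<Sum>i\<in>UNIV. monom (v $ i) (w i))" for v :: "real^'n"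
  have inner_curve: "curve t \<bullet> v = poly (V v) t" for v t
    by (simp add: V_def inner_vec_def curve_def poly_sum poly_monom mult.commute)
  have "V v \<noteq> 0" if "v \<in> R" for v
  proof -
    from that R(2) obtain j where j: "v $ j \<noteq> 0" by (metis vec_eq_iff zero_index)
    have "coeff (V v) (w j) = (\<Sum>i\<in>UNIV. if i = j then v $ i else 0)"
      unfolding V_def coeff_sum coeff_monom using w by (intro sum.cong refl) (auto dest: injD)
    with j show ?thesis by auto
  qed
  then have "finite (\<Union>v\<in>R. {t. poly (V v) t = 0})"
    using R(1) poly_roots_finite by blast
  then have "infinite (UNIV - (\<Union>v\<in>R. {t. poly (V v) t = 0}))"
    by (simp add: Diff_infinite_finite infinite_UNIV_char_0)
  moreover have "UNIV - (\<Union>v\<in>R. {t. poly (V v) t = 0}) \<subseteq> {t. poly Q t = 0}"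
    using zero by (auto simp: regular_set_def inner_curve simp flip: peval_curve)
  ultimately have "infinite {t. poly Q t = 0}" using finite_subset by blast
  with \<open>Q \<noteq> 0\<close> show False using poly_roots_finite by blast
qed

definition homogeneous_on :: "(real^'n) set \<Rightarrow> int \<Rightarrow> (real^'n \<Rightarrow> real) \<Rightarrow> bool" where
  "homogeneous_on S k f \<longleftrightarrow> (\<forall>x\<in>S. \<forall>t>0. f (t *\<^sub>R x) = t powi k * f x)"

lemma homogeneous_on_diff:
  "homogeneous_on S k f \<Longrightarrow> homogeneous_on S k g \<Longrightarrow> homogeneous_on S k (\<lambda>x. f x - g x)"
  by (simp add: homogeneous_on_def right_diff_distrib)

lemma homogeneous_on_cmult: "homogeneous_on S k f \<Longrightarrow> homogeneous_on S k (\<lambda>x. c * f x)"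
  by (simp add: homogeneous_on_def)

lemma homogeneous_on_minus: "homogeneous_on S k f \<Longrightarrow> homogeneous_on S k (\<lambda>x. - f x)"
  by (simp add: homogeneous_on_def)

text \<open>Along a ray the sum is a polynomial in the scaling factor with infinitely many roots.\<close>

lemma homogeneous_sum_eq_zero:
  fixes g :: "nat \<Rightarrow> real^'n \<Rightarrow> real"
  assumes cone: "\<And>x t. x \<in> S \<Longrightarrow> t > 0 \<Longrightarrow> t *\<^sub>R x \<in> S"
    and hom: "\<And>m. m \<le> M \<Longrightarrow> homogeneous_on S (int m - int d) (g m)"
    and sum: "\<And>x. x \<in> S \<Longrightarrow> (\<Sum>m\<le>M. g m x) = 0"
    and "x \<in> S" "m \<le> M"
  shows "g m x = 0"
proof -
  have "(\<Sum>m\<le>M. g m x * t ^ m) = 0" if "t > 0" for t :: real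
  proof -
    have "g m x * t ^ m = t ^ d * g m (t *\<^sub>R x)" if "m \<le> M" for m
      using hom[OF that] \<open>x \<in> S\<close> \<open>t > 0\<close>
      by (simp add: homogeneous_on_def power_int_diff field_simps)
    then have "(\<Sum>m\<le>M. g m x * t ^ m) = t ^ d * (\<Sum>m\<le>M. g m (t *\<^sub>R x))"
      by (simp add: sum_distrib_left)
    also have "\<dots> = 0" using sum cone \<open>x \<in> S\<close> \<open>t > 0\<close> by simp
    finally show ?thesis .
  qed
  then have "{0<..} \<subseteq> {t. (\<Sum>m\<le>M. g m x * t ^ m) = (0::real)}" by auto
  then have "infinite {t. (\<Sum>m\<le>M. g m x * t ^ m) = (0::real)}"
    using infinite_Ioi finite_subset by blast
  then show ?thesis using polyfun_finite_roots[of "\<lambda>m. g m x" M] \<open>m \<le> M\<close> by auto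
qed

section \<open>Regular functions\<close>

text \<open>Dunkl operators map this class to itself, and its members are differentiable on the
  regular set. Partial derivatives of members agree with members only on the regular set, hence
  the last rule.\<close>

inductive regular_fun :: "(real^'n) set \<Rightarrow> (real^'n \<Rightarrow> real) \<Rightarrow> bool" for R where
  regular_fun_const: "regular_fun R (\<lambda>x. c)"
| regular_fun_coord: "regular_fun R (\<lambda>x. x $ j)"
| regular_fun_add: "regular_fun R f \<Longrightarrow> regular_fun R g \<Longrightarrow> regular_fun R (\<lambda>x. f x + g x)"
| regular_fun_mult: "regular_fun R f \<Longrightarrow> regular_fun R g \<Longrightarrow> regular_fun R (\<lambda>x. f x * g x)"
| regular_fun_refl: "regular_fun R f \<Longrightarrow> v \<in> R \<Longrightarrow> regular_fun R (\<lambda>x. f (refl v x))"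
| regular_fun_divide_root: "regular_fun R f \<Longrightarrow> v \<in> R \<Longrightarrow> regular_fun R (\<lambda>x. f x / (x \<bullet> v))"
| regular_fun_cong:
    "regular_fun R f \<Longrightarrow> (\<And>x. x \<in> regular_set R \<Longrightarrow> f x = g x) \<Longrightarrow> regular_fun R g"

lemma regular_fun_cmult: "regular_fun R f \<Longrightarrow> regular_fun R (\<lambda>x. c * f x)"
  by (rule regular_fun_mult[OF regular_fun_const])

lemma regular_fun_diff: "regular_fun R f \<Longrightarrow> regular_fun R g \<Longrightarrow> regular_fun R (\<lambda>x. f x - g x)"
  using regular_fun_add[OF _ regular_fun_cmult[of R g "-1"]] by simp

lemma regular_fun_sum:
  "finite A \<Longrightarrow> (\<And>a. a \<in> A \<Longrightarrow> regular_fun R (f a)) \<Longrightarrow> regular_fun R (\<lambda>x. \<Sum>a\<in>A. f a x)"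
  by (induction A rule: finite_induct) (auto intro: regular_fun_const regular_fun_add)

lemma regular_fun_prod:
  "finite A \<Longrightarrow> (\<And>a. a \<in> A \<Longrightarrow> regular_fun R (f a)) \<Longrightarrow> regular_fun R (\<lambda>x. \<Prod>a\<in>A. f a x)"
  by (induction A rule: finite_induct) (auto intro: regular_fun_const regular_fun_mult)

lemma regular_fun_power: "regular_fun R f \<Longrightarrow> regular_fun R (\<lambda>x. f x ^ m)"
  by (induction m) (auto intro: regular_fun_const regular_fun_mult)

lemma regular_fun_peval: "is_poly c \<Longrightarrow> regular_fun R (peval c)"
  unfolding peval_def[abs_def] Defs.mono_def is_poly_def
  by (intro regular_fun_sum regular_fun_cmult regular_fun_prod regular_fun_power regular_fun_coord) auto

locale root_arrangement =
  fixes R :: "(real^'n) set"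
  assumes finite_roots: "finite R" and zero_notin_roots: "0 \<notin> R"
    and refl_closed: "\<And>u v. u \<in> R \<Longrightarrow> v \<in> R \<Longrightarrow> refl v u \<in> R"
begin

abbreviation "U \<equiv> regular_set R"

lemma open_U: "open U"
  using open_regular_set[OF finite_roots] .

lemma refl_in_U: "x \<in> U \<Longrightarrow> v \<in> R \<Longrightarrow> refl v x \<in> U"
  using refl_closed by (auto simp: regular_set_def refl_inner_commute)

text \<open>The derivative is carried as a family of class members, so that the induction also
  yields the regularity of the partial derivatives.\<close>

lemma regular_fun_has_regular_derivative:
  assumes "regular_fun R f"
  shows "\<exists>F. (\<forall>h. regular_fun R (\<lambda>x. F x h)) \<and> (\<forall>x\<in>U. (f has_derivative F x) (at x))"
  using assms
proof (induction rule: regular_fun.induct)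
  case (regular_fun_const c)
  show ?case
    by (intro exI[of _ "\<lambda>x h. 0"] conjI allI ballI regular_fun.regular_fun_const
        has_derivative_const)
next
  case (regular_fun_coord j)
  show ?case
    by (intro exI[of _ "\<lambda>x h. h $ j"] conjI allI ballI regular_fun.regular_fun_const
        bounded_linear_imp_has_derivative bounded_linear_vec_nth)
next
  case (regular_fun_add f g)
  then obtain F G where "\<forall>h. regular_fun R (\<lambda>x. F x h)" "\<forall>x\<in>U. (f has_derivative F x) (at x)"
    "\<forall>h. regular_fun R (\<lambda>x. G x h)" "\<forall>x\<in>U. (g has_derivative G x) (at x)"
    by blast
  then show ?case
    by (intro exI[of _ "\<lambda>x h. F x h + G x h"] conjI allI ballI
        regular_fun.regular_fun_add has_derivative_add) auto
next
  case (regular_fun_mult f g)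
  then obtain F G where "\<forall>h. regular_fun R (\<lambda>x. F x h)" "\<forall>x\<in>U. (f has_derivative F x) (at x)"
    "\<forall>h. regular_fun R (\<lambda>x. G x h)" "\<forall>x\<in>U. (g has_derivative G x) (at x)"
    by blast
  with regular_fun_mult.hyps show ?case
    by (intro exI[of _ "\<lambda>x h. f x * G x h + F x h * g x"] conjI allI ballI
        regular_fun.regular_fun_add regular_fun.regular_fun_mult has_derivative_mult) auto
next
  case (regular_fun_refl f v)
  then obtain F where F: "\<forall>h. regular_fun R (\<lambda>x. F x h)" "\<forall>x\<in>U. (f has_derivative F x) (at x)"
    by blast
  have "((\<lambda>x. f (refl v x)) has_derivative (\<lambda>h. F (refl v x) (refl v h))) (at x)" if "x \<in> U" for x
  proof -
    have "refl v x \<in> U" using refl_in_U[OF that regular_fun_refl.hyps(2)] .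
    with F(2) have "(f \<circ> refl v has_derivative F (refl v x) \<circ> refl v) (at x)"
      by (intro diff_chain_at bounded_linear_imp_has_derivative bounded_linear_refl) blast
    then show ?thesis by (simp add: o_def)
  qed
  with regular_fun_refl.hyps F(1) show ?case
    by (intro exI[of _ "\<lambda>x h. F (refl v x) (refl v h)"] conjI allI ballI
        regular_fun.regular_fun_refl) auto
next
  case (regular_fun_divide_root f v)
  then obtain F where F: "\<forall>h. regular_fun R (\<lambda>x. F x h)" "\<forall>x\<in>U. (f has_derivative F x) (at x)"
    by blast
  have "((\<lambda>x. f x / (x \<bullet> v)) has_derivative
      (\<lambda>h. F x h / (x \<bullet> v) - f x * (h \<bullet> v) / (x \<bullet> v) / (x \<bullet> v))) (at x)" if "x \<in> U" for x
  proof -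
    have nz: "x \<bullet> v \<noteq> 0" using that regular_fun_divide_root.hyps(2) by (auto simp: regular_set_def)
    have "((\<lambda>x. x \<bullet> v) has_derivative (\<lambda>h. h \<bullet> v)) (at x)"
      by (intro bounded_linear_imp_has_derivative bounded_linear_inner_left)
    from has_derivative_divide'[OF F(2)[rule_format, OF that] this nz] show ?thesis
      by (rule has_derivative_eq_rhs) (use nz in \<open>simp add: fun_eq_iff field_simps\<close>)
  qed
  with regular_fun_divide_root.hyps F(1) show ?case
    by (intro exI[of _ "\<lambda>x h. F x h / (x \<bullet> v) - f x * (h \<bullet> v) / (x \<bullet> v) / (x \<bullet> v)"]
        conjI allI ballI regular_fun_diff regular_fun.regular_fun_divide_root
        regular_fun.regular_fun_mult regular_fun.regular_fun_const) auto
next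
  case (regular_fun_cong f g)
  then obtain F where F: "\<forall>h. regular_fun R (\<lambda>x. F x h)" "\<forall>x\<in>U. (f has_derivative F x) (at x)"
    by blast
  have "(g has_derivative F x) (at x)" if "x \<in> U" for x
    using has_derivative_transform_within_open[OF F(2)[rule_format, OF that] open_U that]
      regular_fun_cong.hyps(2) by blast
  with F(1) show ?case by blast
qed

lemma regular_fun_has_derivative:
  assumes "regular_fun R f" "x \<in> U"
  shows "(f has_derivative (\<lambda>h. \<Sum>j\<in>UNIV. h $ j * partial j f x)) (at x)"
proof -
  obtain F where "\<forall>x\<in>U. (f has_derivative F x) (at x)"
    using regular_fun_has_regular_derivative[OF assms(1)] by blast
  then have F: "(f has_derivative F x) (at x)" using assms(2) by blast
  have "F x h = (\<Sum>j\<in>UNIV. h $ j * partial j f x)" for h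
    by (subst linear_eq_sum_coords[OF has_derivative_linear[OF F]])
       (simp add: partial_eq_derivative[OF F])
  then have "F x = (\<lambda>h. \<Sum>j\<in>UNIV. h $ j * partial j f x)" by (simp add: fun_eq_iff)
  with F show ?thesis by simp
qed

lemma regular_fun_partial: "regular_fun R f \<Longrightarrow> regular_fun R (partial j f)"
proof -
  assume "regular_fun R f"
  then obtain F where F: "\<forall>h. regular_fun R (\<lambda>x. F x h)" "\<forall>x\<in>U. (f has_derivative F x) (at x)"
    using regular_fun_has_regular_derivative by blast
  have "F x (axis j 1) = partial j f x" if "x \<in> U" for x
    using partial_eq_derivative[OF F(2)[rule_format, OF that]] by simp
  then show ?thesis by (rule regular_fun_cong[OF F(1)[rule_format, of "axis j 1"]])
qed

lemma homogeneous_partial: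
  assumes f: "regular_fun R f" and hom: "homogeneous_on U k f"
  shows "homogeneous_on U (k - 1) (partial i f)"
  unfolding homogeneous_on_def
proof (intro ballI allI impI)
  fix x and t :: real assume x: "x \<in> U" and t: "t > 0"
  have tx: "t *\<^sub>R x \<in> U" using x t by (intro scaleR_in_regular_set) auto
  have "((\<lambda>y. f (t *\<^sub>R y)) has_derivative
      (\<lambda>h. \<Sum>j\<in>UNIV. (t *\<^sub>R h) $ j * partial j f (t *\<^sub>R x))) (at x)"
    using diff_chain_at[OF bounded_linear_imp_has_derivative[OF bounded_linear_scaleR_right]
        regular_fun_has_derivative[OF f tx]]
    by (simp add: o_def)
  moreover have "((\<lambda>y. f (t *\<^sub>R y)) has_derivative
      (\<lambda>h. t powi k * (\<Sum>j\<in>UNIV. h $ j * partial j f x))) (at x)"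
  proof (rule has_derivative_transform_within_open[OF _ open_U x])
    show "((\<lambda>y. t powi k * f y) has_derivative (\<lambda>h. t powi k * (\<Sum>j\<in>UNIV. h $ j * partial j f x))) (at x)"
      by (intro has_derivative_mult_right regular_fun_has_derivative f x)
    show "t powi k * f y = f (t *\<^sub>R y)" if "y \<in> U" for y
      using hom that t by (simp add: homogeneous_on_def)
  qed
  ultimately have "(\<lambda>h. \<Sum>j\<in>UNIV. (t *\<^sub>R h) $ j * partial j f (t *\<^sub>R x)) =
      (\<lambda>h. t powi k * (\<Sum>j\<in>UNIV. h $ j * partial j f x))"
    by (rule has_derivative_unique)
  from fun_cong[OF this, of "axis i 1"]
  have "t * partial i f (t *\<^sub>R x) = t powi k * partial i f x"
    by (simp add: mult.assoc sum_distrib_left[symmetric] sum_axis_mult)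
  moreover have "t powi k = t * t powi (k - 1)"
    using power_int_add_1[of t "k - 1"] t by simp
  ultimately show "partial i f (t *\<^sub>R x) = t powi (k - 1) * partial i f x"
    using t by simp
qed

lemma euler_peval:
  assumes c: "is_poly c" and deg: "deg_le n c" and x: "x \<in> U"
  shows "(\<Sum>j\<in>UNIV. x $ j * partial j (peval c) x) = (\<Sum>k\<le>n. real k * peval (hom_part k c) x)"
proof -
  have "peval c (x + s *\<^sub>R x) = (\<Sum>k\<le>n. (1 + s) ^ k * peval (hom_part k c) x)" for s
    using peval_eq_sum_hom_part[OF c deg] peval_hom_part_scaleR[where t = "1 + s" and x = x]
    by (simp add: scaleR_add_left)
  moreover have "((\<lambda>s. \<Sum>k\<le>n. (1 + s) ^ k * peval (hom_part k c) x) has_real_derivative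
      (\<Sum>k\<le>n. real k * peval (hom_part k c) x)) (at 0)"
    by (auto intro!: derivative_eq_intros)
  ultimately show ?thesis
    using DERIV_unique has_real_derivative_along_line[OF
        regular_fun_has_derivative[OF regular_fun_peval[OF c] x], of x]
    by fastforce
qed

end

section \<open>Dunkl operators\<close>

locale dunkl_setting = root_arrangement R for R :: "(real^'n) set" +
  fixes u0 :: "real^'n" and \<kappa> :: "real^'n \<Rightarrow> real"
begin

abbreviation "Rpos \<equiv> pos_roots R u0"
abbreviation "D \<equiv> dunkl R u0 \<kappa>"
abbreviation "\<Delta> \<equiv> dunkl_lap R u0 \<kappa>"

lemma pos_roots_subset: "Rpos \<subseteq> R"
  by (auto simp: pos_roots_def)

lemma finite_pos_roots: "finite Rpos"
  using finite_roots pos_roots_subset finite_subset by blast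

lemma inner_pos_root_neq_0: "x \<in> U \<Longrightarrow> v \<in> Rpos \<Longrightarrow> x \<bullet> v \<noteq> 0"
  using pos_roots_subset by (auto simp: regular_set_def)

lemma dunkl_cong:
  assumes fg: "\<And>y. y \<in> U \<Longrightarrow> f y = g y" and x: "x \<in> U"
  shows "D i f x = D i g x"
proof -
  have "partial i f x = partial i g x" by (rule partial_cong_open[OF open_U x fg])
  moreover have "f (refl v x) = g (refl v x)" if "v \<in> Rpos" for v
    using fg refl_in_U[OF x] pos_roots_subset that by blast
  ultimately show ?thesis using fg[OF x] by (simp add: dunkl_def)
qed

lemma dunkl_lap_cong:
  assumes "\<And>y. y \<in> U \<Longrightarrow> f y = g y" "x \<in> U"
  shows "\<Delta> f x = \<Delta> g x"
  unfolding dunkl_lap_def using assms by (intro sum.cong refl dunkl_cong) auto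

lemma regular_fun_dunkl: "regular_fun R f \<Longrightarrow> regular_fun R (D i f)"
proof -
  assume f: "regular_fun R f"
  have "regular_fun R (\<lambda>x. (\<kappa> v * v $ i) * ((f x - f (refl v x)) / (x \<bullet> v)))" if "v \<in> Rpos" for v
    using that pos_roots_subset f
    by (intro regular_fun_cmult regular_fun_divide_root regular_fun_diff regular_fun_refl) auto
  then have "regular_fun R (\<lambda>x. \<kappa> v * (f x - f (refl v x)) / (x \<bullet> v) * v $ i)" if "v \<in> Rpos" for v
    using that by (simp add: mult_ac)
  then show ?thesis
    unfolding dunkl_def[abs_def] using f finite_pos_roots
    by (intro regular_fun_add regular_fun_partial regular_fun_sum) auto
qed

lemma regular_fun_dunkl_lap: "regular_fun R f \<Longrightarrow> regular_fun R (\<Delta> f)"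
  unfolding dunkl_lap_def by (intro regular_fun_sum regular_fun_dunkl) auto

lemma dunkl_linear:
  assumes f: "regular_fun R f" and g: "regular_fun R g" and x: "x \<in> U"
  shows "D i (\<lambda>y. a * f y + b * g y) x = a * D i f x + b * D i g x"
proof -
  define A where "A h v = \<kappa> v * (h x - h (refl v x)) / (x \<bullet> v) * v $ i" for h v
  have "D i h x = partial i h x + (\<Sum>v\<in>Rpos. A h v)" for h
    by (simp add: dunkl_def A_def)
  moreover have "partial i (\<lambda>y. a * f y + b * g y) x = a * partial i f x + b * partial i g x"
    by (subst partial_eq_derivative[OF has_derivative_add[OF
          has_derivative_mult_right[OF regular_fun_has_derivative[OF f x]]
          has_derivative_mult_right[OF regular_fun_has_derivative[OF g x]]]])
       (simp add: sum_axis_mult)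
  moreover have "A (\<lambda>y. a * f y + b * g y) v = a * A f v + b * A g v" for v
    unfolding A_def by (simp add: algebra_simps add_divide_distrib diff_divide_distrib)
  ultimately show ?thesis
    by (simp add: sum.distrib sum_distrib_left algebra_simps)
qed

lemma dunkl_cmult: "regular_fun R f \<Longrightarrow> x \<in> U \<Longrightarrow> D i (\<lambda>y. a * f y) x = a * D i f x"
  using dunkl_linear[of f f x i a 0] by simp

lemma dunkl_eq_0:
  assumes "\<And>y. y \<in> U \<Longrightarrow> f y = 0" "x \<in> U"
  shows "D i f x = 0"
proof -
  have "D i f x = D i (\<lambda>y. 0) x" using assms by (rule dunkl_cong)
  also have "\<dots> = 0" by (simp add: dunkl_def partial_eq_derivative[OF has_derivative_const])
  finally show ?thesis .
qed

lemma dunkl_sum: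
  assumes "finite A" "\<And>a. a \<in> A \<Longrightarrow> regular_fun R (f a)" "x \<in> U"
  shows "D i (\<lambda>y. \<Sum>a\<in>A. f a y) x = (\<Sum>a\<in>A. D i (f a) x)"
  using assms
proof (induction A rule: finite_induct)
  case empty
  show ?case using dunkl_eq_0[OF _ empty.prems(2)] by simp
next
  case (insert a A)
  have "regular_fun R (\<lambda>y. \<Sum>a\<in>A. f a y)"
    using insert by (intro regular_fun_sum) auto
  with insert show ?case
    using dunkl_linear[of "f a" "\<lambda>y. \<Sum>a\<in>A. f a y" x i 1 1] by simp
qed

lemma dunkl_lap_sum:
  assumes "finite A" "\<And>a. a \<in> A \<Longrightarrow> regular_fun R (f a)" "x \<in> U"
  shows "\<Delta> (\<lambda>y. \<Sum>a\<in>A. f a y) x = (\<Sum>a\<in>A. \<Delta> (f a) x)"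
proof -
  have "D i (D i (\<lambda>y. \<Sum>a\<in>A. f a y)) x = D i (\<lambda>y. \<Sum>a\<in>A. D i (f a) y) x" for i
    using assms by (intro dunkl_cong dunkl_sum) auto
  also have "\<dots> i = (\<Sum>a\<in>A. D i (D i (f a)) x)" for i
    using assms by (intro dunkl_sum regular_fun_dunkl) auto
  finally show ?thesis
    unfolding dunkl_lap_def by (simp add: sum.swap[of _ UNIV])
qed

lemma dunkl_lap_cmult:
  assumes "regular_fun R f" "x \<in> U"
  shows "\<Delta> (\<lambda>y. a * f y) x = a * \<Delta> f x"
proof -
  have "D i (D i (\<lambda>y. a * f y)) x = D i (\<lambda>y. a * D i f y) x" for i
    using assms by (intro dunkl_cong dunkl_cmult) auto
  also have "\<dots> i = a * D i (D i f) x" for i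
    using assms by (intro dunkl_cmult regular_fun_dunkl) auto
  finally show ?thesis
    unfolding dunkl_lap_def by (simp add: sum_distrib_left)
qed

lemma dunkl_lap_eq_0: "(\<And>y. y \<in> U \<Longrightarrow> f y = 0) \<Longrightarrow> x \<in> U \<Longrightarrow> \<Delta> f x = 0"
  unfolding dunkl_lap_def by (simp add: dunkl_eq_0)

lemma homogeneous_dunkl:
  assumes f: "regular_fun R f" and hom: "homogeneous_on U k f"
  shows "homogeneous_on U (k - 1) (D i f)"
  unfolding homogeneous_on_def
proof (intro ballI allI impI)
  fix x and t :: real assume x: "x \<in> U" and t: "t > 0"
  have tk: "t powi k = t * t powi (k - 1)"
    using power_int_add_1[of t "k - 1"] t by simp
  have "\<kappa> v * (f (t *\<^sub>R x) - f (refl v (t *\<^sub>R x))) / (t *\<^sub>R x \<bullet> v) * v $ i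
      = t powi (k - 1) * (\<kappa> v * (f x - f (refl v x)) / (x \<bullet> v) * v $ i)" if v: "v \<in> Rpos" for v
  proof -
    have "f (refl v (t *\<^sub>R x)) = t powi k * f (refl v x)"
      using hom t refl_in_U[OF x] pos_roots_subset v by (auto simp: homogeneous_on_def refl_scaleR)
    moreover have "f (t *\<^sub>R x) = t powi k * f x" using hom t x by (simp add: homogeneous_on_def)
    ultimately show ?thesis
      using t tk inner_pos_root_neq_0[OF x v] by (simp add: field_simps)
  qed
  moreover have "partial i f (t *\<^sub>R x) = t powi (k - 1) * partial i f x"
    using homogeneous_partial[OF f hom] x t by (simp add: homogeneous_on_def)
  ultimately show "D i f (t *\<^sub>R x) = t powi (k - 1) * D i f x"
    by (simp add: dunkl_def sum_distrib_left distrib_left)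
qed

lemma homogeneous_dunkl_lap:
  assumes "regular_fun R f" "homogeneous_on U k f"
  shows "homogeneous_on U (k - 2) (\<Delta> f)"
proof -
  have "homogeneous_on U (k - 1 - 1) (D i (D i f))" for i
    using assms by (intro homogeneous_dunkl regular_fun_dunkl)
  then show ?thesis
    by (simp add: homogeneous_on_def dunkl_lap_def sum_distrib_left)
qed

lemma sum_coord_dunkl:
  assumes x: "x \<in> U"
  shows "(\<Sum>i\<in>UNIV. x $ i * D i f x) =
    (\<Sum>j\<in>UNIV. x $ j * partial j f x) + (\<Sum>v\<in>Rpos. \<kappa> v * (f x - f (refl v x)))"
proof -
  have "(\<Sum>i\<in>UNIV. x $ i * D i f x) = (\<Sum>j\<in>UNIV. x $ j * partial j f x)
      + (\<Sum>v\<in>Rpos. \<Sum>i\<in>UNIV. x $ i * (\<kappa> v * (f x - f (refl v x)) / (x \<bullet> v) * v $ i))"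
    unfolding dunkl_def distrib_left sum.distrib sum_distrib_left by (subst sum.swap) (rule refl)
  also have "\<dots> = (\<Sum>j\<in>UNIV. x $ j * partial j f x) + (\<Sum>v\<in>Rpos. \<kappa> v * (f x - f (refl v x)))"
    unfolding sum_coord_mult_inner using inner_pos_root_neq_0[OF x] by simp
  finally show ?thesis .
qed

lemma sum_dunkl_coord_mult:
  assumes f: "regular_fun R f" and x: "x \<in> U"
  shows "(\<Sum>i\<in>UNIV. D i (\<lambda>y. y $ i * f y) x) = real CARD('n) * f x
    + (\<Sum>j\<in>UNIV. x $ j * partial j f x) + (\<Sum>v\<in>Rpos. \<kappa> v * (f x + f (refl v x)))"
proof -
  have partial_coord_mult: "partial i (\<lambda>y. y $ i * f y) x = f x + x $ i * partial i f x" for i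
    by (subst partial_eq_derivative[OF has_derivative_mult[OF
          bounded_linear_imp_has_derivative[OF bounded_linear_vec_nth]
          regular_fun_has_derivative[OF f x]]])
       (simp add: sum_axis_mult)
  have "(\<Sum>i\<in>UNIV. \<kappa> v * (x $ i * f x - refl v x $ i * f (refl v x)) / (x \<bullet> v) * v $ i)
      = \<kappa> v * (f x + f (refl v x))" if "v \<in> Rpos" for v
  proof -
    let ?c = "\<kappa> v / (x \<bullet> v)"
    have "(\<Sum>i\<in>UNIV. \<kappa> v * (x $ i * f x - refl v x $ i * f (refl v x)) / (x \<bullet> v) * v $ i)
        = (\<Sum>i\<in>UNIV. x $ i * (?c * f x * v $ i) - refl v x $ i * (?c * f (refl v x) * v $ i))"
      by (intro sum.cong refl) (simp add: divide_inverse algebra_simps)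
    also have "\<dots> = ?c * f x * (x \<bullet> v) - ?c * f (refl v x) * (refl v x \<bullet> v)"
      by (simp only: sum_subtractf sum_coord_mult_inner)
    also have "\<dots> = \<kappa> v * (f x + f (refl v x))"
      using inner_pos_root_neq_0[OF x that] by (simp add: refl_inner_root field_simps)
    finally show ?thesis .
  qed
  then have "(\<Sum>v\<in>Rpos. \<Sum>i\<in>UNIV.
      \<kappa> v * (x $ i * f x - refl v x $ i * f (refl v x)) / (x \<bullet> v) * v $ i)
      = (\<Sum>v\<in>Rpos. \<kappa> v * (f x + f (refl v x)))"
    by simp
  moreover have "(\<Sum>i\<in>UNIV. D i (\<lambda>y. y $ i * f y) x) = (\<Sum>i\<in>UNIV. partial i (\<lambda>y. y $ i * f y) x)
      + (\<Sum>v\<in>Rpos. \<Sum>i\<in>UNIV.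
          \<kappa> v * (x $ i * f x - refl v x $ i * f (refl v x)) / (x \<bullet> v) * v $ i)"
    unfolding dunkl_def sum.distrib by (subst sum.swap) (rule refl)
  ultimately show ?thesis
    by (simp add: partial_coord_mult sum.distrib)
qed

end

abbreviation gaussian :: "real \<Rightarrow> real^'n \<Rightarrow> real" where
  "gaussian \<omega> y \<equiv> exp (-(\<omega>/2) * (norm y)^2)"

lemma has_derivative_gaussian:
  "(gaussian \<omega> has_derivative (\<lambda>h. - \<omega> * (x \<bullet> h) * gaussian \<omega> x)) (at x)"
proof -
  have "((\<lambda>y. exp (-(\<omega>/2) * (y \<bullet> y))) has_derivative
      (\<lambda>h. -(\<omega>/2) * (x \<bullet> h + h \<bullet> x) * exp (-(\<omega>/2) * (x \<bullet> x)))) (at x)"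
    by (intro has_derivative_exp has_derivative_mult_right has_derivative_inner has_derivative_ident)
  then show ?thesis
    by (simp add: power2_norm_eq_inner inner_commute algebra_simps)
qed

context dunkl_setting
begin

lemma dunkl_mult_gaussian:
  assumes f: "regular_fun R f" and x: "x \<in> U"
  shows "D i (\<lambda>y. f y * gaussian \<omega> y) x = gaussian \<omega> x * (D i f x - \<omega> * x $ i * f x)"
proof -
  have "partial i (\<lambda>y. f y * gaussian \<omega> y) x
      = f x * (- \<omega> * x $ i * gaussian \<omega> x) + partial i f x * gaussian \<omega> x"
    by (subst partial_eq_derivative[OF has_derivative_mult[OF
          regular_fun_has_derivative[OF f x] has_derivative_gaussian]])
       (simp add: sum_axis_mult inner_axis)
  moreover have "(\<Sum>v\<in>Rpos. \<kappa> v * (f x * gaussian \<omega> x - f (refl v x) * gaussian \<omega> (refl v x))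
        / (x \<bullet> v) * v $ i)
      = gaussian \<omega> x * (\<Sum>v\<in>Rpos. \<kappa> v * (f x - f (refl v x)) / (x \<bullet> v) * v $ i)"
    by (simp add: norm_refl sum_distrib_left algebra_simps)
  ultimately show ?thesis
    by (simp add: dunkl_def algebra_simps)
qed

lemma dunkl_lap_mult_gaussian:
  assumes f: "regular_fun R f" and x: "x \<in> U"
  shows "\<Delta> (\<lambda>y. f y * gaussian \<omega> y) x = gaussian \<omega> x * (\<Delta> f x
    - \<omega> * (real CARD('n) + 2 * gamma_k R u0 \<kappa>) * f x
    - 2 * \<omega> * (\<Sum>j\<in>UNIV. x $ j * partial j f x) + \<omega>\<^sup>2 * (x \<bullet> x) * f x)"
proof -
  define h where "h i y = D i f y - \<omega> * (y $ i * f y)" for i y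
  have h: "regular_fun R (h i)" for i
    unfolding h_def using f
    by (intro regular_fun_diff regular_fun_cmult regular_fun_mult regular_fun_dunkl regular_fun_coord)
  have gauss: "D i (\<lambda>y. f y * gaussian \<omega> y) y = h i y * gaussian \<omega> y" if "y \<in> U" for i y
    using dunkl_mult_gaussian[OF f that] by (simp add: h_def)
  have "D i (D i (\<lambda>y. f y * gaussian \<omega> y)) x = gaussian \<omega> x * (D i (D i f) x
      - \<omega> * D i (\<lambda>y. y $ i * f y) x - \<omega> * (x $ i * D i f x) + \<omega>\<^sup>2 * f x * (x $ i * x $ i))" for i
  proof -
    have "D i (D i (\<lambda>y. f y * gaussian \<omega> y)) x = D i (\<lambda>y. h i y * gaussian \<omega> y) x"
      using gauss x by (rule dunkl_cong)
    also have "\<dots> = gaussian \<omega> x * (D i (h i) x - \<omega> * x $ i * h i x)"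
      by (rule dunkl_mult_gaussian[OF h x])
    also have "D i (h i) x = D i (D i f) x - \<omega> * D i (\<lambda>y. y $ i * f y) x"
      using dunkl_linear[of "D i f" "\<lambda>y. y $ i * f y" x i 1 "- \<omega>"] f x
      by (simp add: h_def[abs_def] regular_fun_dunkl regular_fun_mult regular_fun_coord)
    finally show ?thesis by (simp add: h_def algebra_simps power2_eq_square)
  qed
  then have "\<Delta> (\<lambda>y. f y * gaussian \<omega> y) x = gaussian \<omega> x * (\<Sum>i\<in>UNIV.
      D i (D i f) x - \<omega> * D i (\<lambda>y. y $ i * f y) x - \<omega> * (x $ i * D i f x)
      + \<omega>\<^sup>2 * f x * (x $ i * x $ i))"
    unfolding dunkl_lap_def sum_distrib_left by simp
  also have "\<dots> = gaussian \<omega> x * (\<Delta> f x - \<omega> * (\<Sum>i\<in>UNIV. D i (\<lambda>y. y $ i * f y) x)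
      - \<omega> * (\<Sum>i\<in>UNIV. x $ i * D i f x) + \<omega>\<^sup>2 * f x * (x \<bullet> x))"
    by (simp add: dunkl_lap_def inner_vec_def sum.distrib sum_subtractf sum_distrib_left)
  also have "\<dots> = gaussian \<omega> x * (\<Delta> f x
      - \<omega> * (real CARD('n) + 2 * gamma_k R u0 \<kappa>) * f x
      - 2 * \<omega> * (\<Sum>j\<in>UNIV. x $ j * partial j f x) + \<omega>\<^sup>2 * (x \<bullet> x) * f x)"
    unfolding sum_dunkl_coord_mult[OF f x] sum_coord_dunkl[OF x] gamma_k_def
    by (simp add: sum.distrib sum_subtractf sum_distrib_left sum_distrib_right algebra_simps)
  finally show ?thesis .
qed

end

section \<open>Eigenpolynomials of the Dunkl harmonic oscillator\<close>

lemma sum_shift_2: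
  fixes M :: nat and h :: "nat \<Rightarrow> 'a::comm_monoid_add"
  shows "(\<Sum>m\<le>M + 2. if 2 \<le> m then h (m - 2) else 0) = (\<Sum>k\<le>M. h k)"
proof -
  have "(\<Sum>m\<le>Suc (Suc M). if 2 \<le> m then h (m - 2) else 0) = (\<Sum>k\<le>M. h k)"
    by (simp only: sum.atMost_Suc_shift) simp
  then show ?thesis by (simp add: numeral_2_eq_2)
qed

locale dunkl_eigenpolynomial = dunkl_setting R u0 \<kappa> for R :: "(real^'n) set" and u0 \<kappa> +
  fixes \<omega> E :: real and n :: nat and p :: "('n \<Rightarrow> nat) \<Rightarrow> real"
  assumes omega_pos: "\<omega> > 0" and is_poly_p: "is_poly p" and deg_p: "deg_le n p"
    and top_part_p: "hom_part n p \<noteq> (\<lambda>_. 0)"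
    and eigen: "\<And>x. x \<in> U \<Longrightarrow> \<omega>\<^sup>2 * (norm x)\<^sup>2 * (peval p x * gaussian \<omega> x)
      - \<Delta> (\<lambda>y. peval p y * gaussian \<omega> y) x = E * (peval p x * gaussian \<omega> x)"
begin

abbreviation pk :: "nat \<Rightarrow> real^'n \<Rightarrow> real" where
  "pk k \<equiv> peval (hom_part k p)"

definition c :: "nat \<Rightarrow> real" where
  "c k = \<omega> * (real CARD('n) + 2 * gamma_k R u0 \<kappa> + 2 * real k) - E"

abbreviation L :: "(real^'n \<Rightarrow> real) \<Rightarrow> real^'n \<Rightarrow> real" where
  "L \<equiv> (\<lambda>f y. - \<Delta> f y / (4 * \<omega>))"

lemma regular_fun_pk: "regular_fun R (pk k)"
  by (intro regular_fun_peval is_poly_hom_part is_poly_p)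

lemma homogeneous_pk: "homogeneous_on U (int k) (pk k)"
  by (simp add: homogeneous_on_def peval_hom_part_scaleR)

lemma pk_eq_0_above: "n < k \<Longrightarrow> pk k = (\<lambda>_. 0)"
  by (simp add: hom_part_eq_0_above[OF deg_p] fun_eq_iff)

lemma eigen_equation_parts:
  assumes x: "x \<in> U"
  shows "(\<Sum>k\<le>n. c k * pk k x - \<Delta> (pk k) x) = 0"
proof -
  let ?A = "\<omega> * (real CARD('n) + 2 * gamma_k R u0 \<kappa>)"
  let ?Eu = "\<Sum>j\<in>UNIV. x $ j * partial j (peval p) x"
  have "gaussian \<omega> x * (?A * peval p x + 2 * \<omega> * ?Eu - E * peval p x - \<Delta> (peval p) x) = 0"
    using eigen[OF x] dunkl_lap_mult_gaussian[OF regular_fun_peval[OF is_poly_p] x, of \<omega>]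
    by (simp add: power2_norm_eq_inner algebra_simps)
  then have eq: "?A * peval p x + 2 * \<omega> * ?Eu - E * peval p x - \<Delta> (peval p) x = 0"
    by simp
  have "\<Delta> (peval p) x = \<Delta> (\<lambda>y. \<Sum>k\<le>n. pk k y) x"
    by (intro arg_cong[where f = "\<lambda>f. \<Delta> f x"] ext peval_eq_sum_hom_part is_poly_p deg_p)
  also have "\<dots> = (\<Sum>k\<le>n. \<Delta> (pk k) x)"
    using x by (intro dunkl_lap_sum regular_fun_pk) auto
  finally have lap: "\<Delta> (peval p) x = (\<Sum>k\<le>n. \<Delta> (pk k) x)" .
  have "(\<Sum>k\<le>n. c k * pk k x - \<Delta> (pk k) x) = ?A * (\<Sum>k\<le>n. pk k x)
      + 2 * \<omega> * (\<Sum>k\<le>n. real k * pk k x) - E * (\<Sum>k\<le>n. pk k x) - (\<Sum>k\<le>n. \<Delta> (pk k) x)"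
    by (simp add: c_def sum_subtractf sum.distrib sum_distrib_left algebra_simps)
  also have "\<dots> = ?A * peval p x + 2 * \<omega> * ?Eu - E * peval p x - \<Delta> (peval p) x"
    by (simp only: euler_peval[OF is_poly_p deg_p x] lap
        flip: peval_eq_sum_hom_part[OF is_poly_p deg_p])
  finally show ?thesis using eq by simp
qed

lemma dunkl_lap_pk_eq:
  assumes x: "x \<in> U" and m: "m \<le> n + 2"
  shows "\<Delta> (pk m) x = (if 2 \<le> m then c (m - 2) * pk (m - 2) x else 0)"
proof -
  define g where "g m y = (if 2 \<le> m then c (m - 2) * pk (m - 2) y else 0) - \<Delta> (pk m) y" for m y
  have hom: "homogeneous_on U (int m - int 2) (g m)" for m
  proof -
    have "homogeneous_on U (int m - 2) (\<Delta> (pk m))"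
      by (rule homogeneous_dunkl_lap[OF regular_fun_pk homogeneous_pk])
    moreover have "homogeneous_on U (int m - 2) (\<lambda>y. c (m - 2) * pk (m - 2) y)" if "2 \<le> m"
      using homogeneous_on_cmult[OF homogeneous_pk[of "m - 2"]] that by simp
    ultimately show ?thesis
      unfolding g_def by (cases "2 \<le> m") (simp_all add: homogeneous_on_diff homogeneous_on_minus)
  qed
  have sum: "(\<Sum>m\<le>n + 2. g m y) = 0" if "y \<in> U" for y
  proof -
    have high: "(\<Sum>m\<le>n + 2. \<Delta> (pk m) y) = (\<Sum>m\<le>n. \<Delta> (pk m) y)"
      using that pk_eq_0_above by (intro sum.mono_neutral_right) (auto intro: dunkl_lap_eq_0)
    have "(\<Sum>m\<le>n + 2. g m y) = (\<Sum>k\<le>n. c k * pk k y) - (\<Sum>m\<le>n + 2. \<Delta> (pk m) y)"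
      unfolding g_def sum_subtractf sum_shift_2[where M = n and h = "\<lambda>k. c k * pk k y"] ..
    also have "\<dots> = (\<Sum>k\<le>n. c k * pk k y - \<Delta> (pk k) y)"
      by (simp only: high sum_subtractf)
    finally show ?thesis using eigen_equation_parts[OF that] by simp
  qed
  have "g m x = 0"
    by (rule homogeneous_sum_eq_zero[where S = U, OF _ hom sum x m])
       (simp add: scaleR_in_regular_set)
  then show ?thesis by (simp add: g_def)
qed

lemma pk_recurrence:
  assumes "x \<in> U"
  shows "c k * pk k x = \<Delta> (pk (k + 2)) x"
proof (cases "k \<le> n")
  case True
  then show ?thesis using dunkl_lap_pk_eq[OF assms, of "k + 2"] by simp
next
  case False
  then show ?thesis using pk_eq_0_above[of k] pk_eq_0_above[of "k + 2"] dunkl_lap_eq_0 assms by simp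
qed

lemma dunkl_lap_pk_low: "x \<in> U \<Longrightarrow> k < 2 \<Longrightarrow> \<Delta> (pk k) x = 0"
  using dunkl_lap_pk_eq[of x k] by simp

lemma pk_top_nonzero:
  obtains x where "x \<in> U" "pk n x \<noteq> 0"
  using peval_eq_0_on_regular_set[OF finite_roots zero_notin_roots is_poly_hom_part[OF is_poly_p]]
    top_part_p by blast

lemma eigenvalue: "E = \<omega> * (real CARD('n) + 2 * gamma_k R u0 \<kappa> + 2 * real n)"
proof -
  obtain x where x: "x \<in> U" "pk n x \<noteq> 0" by (rule pk_top_nonzero)
  have "c n * pk n x = 0"
    using pk_recurrence[OF x(1), of n] pk_eq_0_above[of "n + 2"] dunkl_lap_eq_0 x(1) by simp
  with x(2) show ?thesis by (simp add: c_def)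
qed

lemma c_eq: "c k = 2 * \<omega> * (real k - real n)"
  unfolding c_def using eigenvalue by (simp add: algebra_simps)

lemma odd_parts_vanish_on_U: "2 * i \<le> n + 1 \<Longrightarrow> x \<in> U \<Longrightarrow> pk (n + 1 - 2 * i) x = 0"
proof (induction i arbitrary: x)
  case 0
  then show ?case using pk_eq_0_above[of "n + 1"] by simp
next
  case (Suc i)
  let ?k = "n + 1 - 2 * Suc i"
  have k: "?k + 2 = n + 1 - 2 * i" "?k < n" using Suc.prems by auto
  have "c ?k * pk ?k x = \<Delta> (pk (n + 1 - 2 * i)) x"
    using pk_recurrence[OF Suc.prems(2), of ?k] k by simp
  also have "\<dots> = 0"
    using Suc.IH Suc.prems by (intro dunkl_lap_eq_0) auto
  finally show ?case using c_eq omega_pos k(2) by simp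
qed

lemma odd_parts_vanish: "2 * i \<le> n + 1 \<Longrightarrow> hom_part (n + 1 - 2 * i) p = (\<lambda>_. 0)"
  by (rule peval_eq_0_on_regular_set[OF finite_roots zero_notin_roots is_poly_hom_part[OF is_poly_p]])
     (rule odd_parts_vanish_on_U)

lemma L_eq_cmult:
  assumes "\<And>y. y \<in> U \<Longrightarrow> f y = a * g y" "regular_fun R g" "x \<in> U"
  shows "L f x = - a * \<Delta> g x / (4 * \<omega>)"
  using dunkl_lap_cong[OF assms(1,3)] dunkl_lap_cmult[OF assms(2,3)] by simp

lemma even_parts_eq:
  "2 * i \<le> n \<Longrightarrow> x \<in> U \<Longrightarrow> pk (n - 2 * i) x = (1 / fact i) * (L ^^ i) (pk n) x"
proof (induction i arbitrary: x)
  case 0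
  then show ?case by simp
next
  case (Suc i)
  let ?k = "n - 2 * Suc i"
  have k: "?k + 2 = n - 2 * i" using Suc.prems by auto
  have c_k: "c ?k = - (4 * \<omega> * real (Suc i))"
    using Suc.prems by (simp add: c_eq algebra_simps)
  have rec: "\<Delta> (pk (n - 2 * i)) x = - (4 * \<omega> * real (Suc i)) * pk ?k x"
    using pk_recurrence[OF Suc.prems(2), of ?k] k c_k by simp
  have IH: "(L ^^ i) (pk n) y = fact i * pk (n - 2 * i) y" if "y \<in> U" for y
    using Suc.IH[OF _ that] Suc.prems by simp
  have "(L ^^ Suc i) (pk n) x = - fact i * \<Delta> (pk (n - 2 * i)) x / (4 * \<omega>)"
    using L_eq_cmult[OF IH regular_fun_pk Suc.prems(2)] by simp
  also have "\<dots> = fact (Suc i) * pk ?k x"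
    unfolding rec using omega_pos by (simp add: field_simps)
  finally show ?case by simp
qed

lemma L_power_eq_0: "(\<And>y. y \<in> U \<Longrightarrow> f y = 0) \<Longrightarrow> x \<in> U \<Longrightarrow> (L ^^ m) f x = 0"
  by (induction m arbitrary: x) (simp_all add: dunkl_lap_eq_0)

lemma L_power_pk_top_eq_0:
  assumes j: "n div 2 < j" and x: "x \<in> U"
  shows "(L ^^ j) (pk n) x = 0"
proof -
  let ?m = "n div 2"
  have vanish: "(L ^^ Suc ?m) (pk n) y = 0" if y: "y \<in> U" for y
  proof -
    have "(L ^^ ?m) (pk n) z = fact ?m * pk (n - 2 * ?m) z" if "z \<in> U" for z
      using even_parts_eq[of ?m z] that by simp
    from L_eq_cmult[OF this regular_fun_pk y]
    have "(L ^^ Suc ?m) (pk n) y = - fact ?m * \<Delta> (pk (n - 2 * ?m)) y / (4 * \<omega>)"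
      by simp
    with dunkl_lap_pk_low[OF y, of "n - 2 * ?m"] show ?thesis by simp
  qed
  have "(L ^^ j) (pk n) = (L ^^ (j - Suc ?m)) ((L ^^ Suc ?m) (pk n))"
    using funpow_add[of "j - Suc ?m" "Suc ?m" L] j by simp
  with L_power_eq_0[OF vanish x] show ?thesis by simp
qed

lemma eigenpolynomial_expansion:
  assumes x: "x \<in> U"
  shows "peval p x = (\<Sum>j. (1 / fact j) * (L ^^ j) (pk n) x)"
proof -
  have "(\<Sum>j. (1 / fact j) * (L ^^ j) (pk n) x) = (\<Sum>j\<le>n div 2. (1 / fact j) * (L ^^ j) (pk n) x)"
    using L_power_pk_top_eq_0 x by (intro suminf_finite) auto
  also have "\<dots> = (\<Sum>j\<le>n div 2. pk (n - 2 * j) x)"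
    using even_parts_eq x by (intro sum.cong refl) auto
  also have "\<dots> = (\<Sum>k\<in>(\<lambda>j. n - 2 * j) ` {..n div 2}. pk k x)"
    by (subst sum.reindex) (auto simp: inj_on_def)
  also have "\<dots> = (\<Sum>k\<le>n. pk k x)"
  proof (rule sum.mono_neutral_left)
    show "\<forall>k\<in>{..n} - (\<lambda>j. n - 2 * j) ` {..n div 2}. pk k x = 0"
    proof
      fix k assume k: "k \<in> {..n} - (\<lambda>j. n - 2 * j) ` {..n div 2}"
      have "odd (n - k)"
      proof
        assume "even (n - k)"
        then have "k = n - 2 * ((n - k) div 2)" using k by auto
        moreover have "(n - k) div 2 \<le> n div 2" by (simp add: div_le_mono)
        ultimately show False using k by blast
      qed
      then obtain b where "n - k = 2 * b + 1" by (rule oddE)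
      then have "k = n + 1 - 2 * Suc b" "2 * Suc b \<le> n + 1" using k by auto
      then show "pk k x = 0" using odd_parts_vanish_on_U[of "Suc b" x] x by simp
    qed
  qed auto
  also have "\<dots> = peval p x"
    by (rule peval_eq_sum_hom_part[OF is_poly_p deg_p, symmetric])
  finally show ?thesis ..
qed

end

theorem mainTheorem14:
  fixes R :: "(real^'n) set" and u0 :: "real^'n" and \<kappa> :: "real^'n \<Rightarrow> real"
    and \<omega> E :: real and n :: nat and p :: "('n \<Rightarrow> nat) \<Rightarrow> real"
  assumes R: "root_system R"
    and u0: "\<forall>v\<in>R. u0 \<bullet> v \<noteq> 0"
    and kappa: "mult_fn R \<kappa>"
    and omega: "\<omega> > 0"
    and p_poly: "is_poly p"
    and p_deg: "deg_le n p"
    and p_top: "hom_part n p \<noteq> (\<lambda>_. 0)"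
    and eig: "\<forall>x\<in>regular_set R.
       \<omega>^2 * (norm x)^2 * (peval p x * exp (-(\<omega>/2) * (norm x)^2))
       - dunkl_lap R u0 \<kappa> (\<lambda>y. peval p y * exp (-(\<omega>/2) * (norm y)^2)) x
       = E * (peval p x * exp (-(\<omega>/2) * (norm x)^2))"
  shows "E = \<omega> * (real CARD('n) + 2 * gamma_k R u0 \<kappa> + 2 * real n)
    \<and> (\<forall>i::nat. 1 \<le> i \<and> 2 * i \<le> n + 1 \<longrightarrow> hom_part (n + 1 - 2 * i) p = (\<lambda>_. 0))
    \<and> (\<forall>i::nat. 2 * i \<le> n \<longrightarrow> (\<forall>x\<in>regular_set R.
          peval (hom_part (n - 2 * i) p) x =
          (1 / fact i) * (((\<lambda>f y. - dunkl_lap R u0 \<kappa> f y / (4 * \<omega>)) ^^ i)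
                            (peval (hom_part n p))) x))
    \<and> (\<forall>x\<in>regular_set R.
          peval p x = (\<Sum>j. (1 / fact j) * (((\<lambda>f y. - dunkl_lap R u0 \<kappa> f y / (4 * \<omega>)) ^^ j)
                            (peval (hom_part n p))) x))"
proof -
  interpret dunkl_eigenpolynomial R u0 \<kappa> \<omega> E n p
    using R omega p_poly p_deg p_top eig by unfold_locales (auto simp: root_system_def)
  show ?thesis
    using eigenvalue odd_parts_vanish even_parts_eq eigenpolynomial_expansion by auto
qed

end
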